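(* Fix speeds $v_1,v_2,v_3>0$ and turning-rate magnitudes $w_1,w_3>0$. Let LSL denote the CSC path with inputs $\mathbf{u}_1=(v_1,w_1)$, $\mathbf{u}_2=(v_2,0)$, $\mathbf{u}_3=(v_3,w_3)$, and RSR the CSC path with inputs $\mathbf{u}_1=(v_1,-w_1)$, $\mathbf{u}_2=(v_2,0)$, $\mathbf{u}_3=(v_3,-w_3)$. Then for every start pose $\mathbf{p}_0$ and every pose $\mathbf{p}_f=(x_f,y_f,\theta_f)$, $\mathbf{p}_f$ is reachable from $\mathbf{p}_0$ by the LSL path or by the RSR path (or both). Equivalently, for each $\theta_f$ the open discs $\{(x_f,y_f):(x_f-c)^2+(y_f-d)^2<r_{31}^2\}$ associated with LSL and with RSR are disjoint.
   Context: A pose is $\mathbf{p}=(x,y,\theta)$, heading understood modulo $2\pi$. An input is $\mathbf{u}=(v,\omega)$. The motion primitive $\mathrm{M}_{\mathbf{u},\tau}$ maps $(x,y,\theta)$ to: if $\omega\neq0$, $\big(x-\frac{v}{\omega}(\sin\theta-\sin(\theta+\omega\tau)),\ y+\frac{v}{\omega}(\cos\theta-\cos(\theta+\omega\tau)),\ \theta+\omega\tau\big)$; if $\omega=0$, $(x+v\tau\cos\theta,\ y+v\tau\sin\theta,\ \theta)$. For a path with fixed inputs $\mathbf{u}_1,\mathbf{u}_2,\mathbf{u}_3$, a pose $\mathbf{p}_f$ is reachable from $\mathbf{p}_0=(x_0,y_0,\theta_0)$ if there exist $\tau_1,\tau_2,\tau_3\ge0$, with $|\omega_i\tau_i|<2\pi$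 for turning segments, such that $\mathrm{M}_{\mathbf{u}_3,\tau_3}(\mathrm{M}_{\mathbf{u}_2,\tau_2}(\mathrm{M}_{\mathbf{u}_1,\tau_1}(\mathbf{p}_0)))$ has position $(x_f,y_f)$ and heading congruent to $\theta_f$ modulo $2\pi$. For a CSC path, $r_i=v_i/\omega_i$ ($i=1,3$), $r_{31}=r_3-r_1$, $c=x_0-r_1\sin\theta_0+r_3\sin\theta_f$, $d=y_0+r_1\cos\theta_0-r_3\cos\theta_f$; a CSC path reaches $\mathbf{p}_f$ iff $(x_f-c)^2+(y_f-d)^2\ge r_{31}^2$. *)

theory Defs
  imports Complex_Main
begin

type_synonym pose = "real \<times> real \<times> real"   (* (x, y, theta) *)
type_synonym input = "real \<times> real"         (* (v, omega) *)

definition motion :: "input \<Rightarrow> real \<Rightarrow> pose \<Rightarrow> pose" where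
  "motion u \<tau> p = (case u of (v, \<omega>) \<Rightarrow> case p of (x, y, \<theta>) \<Rightarrow>
     (if \<omega> \<noteq> 0 then
        (x - v / \<omega> * (sin \<theta> - sin (\<theta> + \<omega> * \<tau>)),
         y + v / \<omega> * (cos \<theta> - cos (\<theta> + \<omega> * \<tau>)),
         \<theta> + \<omega> * \<tau>)
      else (x + v * \<tau> * cos \<theta>, y + v * \<tau> * sin \<theta>, \<theta>)))"

definition admissible :: "input \<Rightarrow> real \<Rightarrow> bool" where
  "admissible u \<tau> \<longleftrightarrow> \<tau> \<ge> 0 \<and> (snd u \<noteq> 0 \<longrightarrow> \<bar>snd u * \<tau>\<bar> < 2 * pi)"

definition heading_cong :: "real \<Rightarrow> real \<Rightarrow> bool" where
  "heading_cong a b \<longleftrightarrow> (\<exists>k::int. a = b + 2 * pi * of_int k)"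

definition reachable :: "input \<Rightarrow> input \<Rightarrow> input \<Rightarrow> pose \<Rightarrow> pose \<Rightarrow> bool" where
  "reachable u1 u2 u3 p0 pf \<longleftrightarrow>
     (\<exists>\<tau>1 \<tau>2 \<tau>3. admissible u1 \<tau>1 \<and> admissible u2 \<tau>2 \<and> admissible u3 \<tau>3 \<and>
        (let q = motion u3 \<tau>3 (motion u2 \<tau>2 (motion u1 \<tau>1 p0)) in
          fst q = fst pf \<and> fst (snd q) = fst (snd pf) \<and>
          heading_cong (snd (snd q)) (snd (snd pf))))"

end

theory Submission imports Defs begin

text \<open>
  Write \<open>z = (x\<^sub>f - x\<^sub>0, y\<^sub>f - y\<^sub>0)\<close> and \<open>A = (r\<^sub>3 sin \<theta>\<^sub>f - r\<^sub>1 sin \<theta>\<^sub>0, r\<^sub>1 cos \<theta>\<^sub>0 - r\<^sub>3 cos \<theta>\<^sub>f)\<close>.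
  Negating both turning rates negates both radii, so the obstructing disc of LSL is centred
  at \<open>A\<close> and that of RSR at \<open>-A\<close> (relative to \<open>z\<close>), both of radius \<open>|r\<^sub>3 - r\<^sub>1|\<close>.
  Since \<open>A\<close> is a difference of vectors of lengths \<open>r\<^sub>3\<close> and \<open>r\<^sub>1\<close>, \<open>|A| \<ge> |r\<^sub>3 - r\<^sub>1|\<close>, and the
  parallelogram law \<open>|z - A|\<^sup>2 + |z + A|\<^sup>2 = 2|z|\<^sup>2 + 2|A|\<^sup>2\<close> shows that \<open>z\<close> cannot lie in both
  discs. Outside its disc a CSC path is constructed explicitly: write the offset from the
  centre as \<open>L (cos \<phi>, sin \<phi>) + r\<^sub>3\<^sub>1 (-sin \<phi>, cos \<phi>)\<close> with \<open>L \<ge> 0\<close>, turn to heading \<open>\<phi>\<close>,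
  drive straight for length \<open>L\<close>, then turn to \<open>\<theta>\<^sub>f\<close>.
\<close>

lemma representative_mod_2pi:
  fixes a :: real
  obtains t and k :: int where "0 \<le> t" "t < 2 * pi" "a = t + 2 * pi * of_int k"
proof
  let ?k = "\<lfloor>a / (2 * pi)\<rfloor>"
  have "2 * pi * of_int ?k \<le> 2 * pi * (a / (2 * pi))"
    by (intro mult_left_mono) simp_all
  then show "0 \<le> a - 2 * pi * of_int ?k"
    by simp
  have "2 * pi * (a / (2 * pi)) < 2 * pi * (of_int ?k + 1)"
    by (intro mult_strict_left_mono) simp_all
  then show "a - 2 * pi * of_int ?k < 2 * pi"
    by (simp add: algebra_simps)
qed simp

lemma turning_reaches_heading:
  fixes \<omega> \<theta> \<alpha> :: real
  assumes "\<omega> \<noteq> 0"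
  obtains \<tau> where "\<tau> \<ge> 0" "\<bar>\<omega> * \<tau>\<bar> < 2 * pi" "heading_cong (\<theta> + \<omega> * \<tau>) \<alpha>"
proof -
  \<comment> \<open>Turn by \<open>t \<in> [0, 2\<pi>)\<close>, the angle still to go in the direction of \<open>\<omega>\<close>.\<close>
  obtain t and k :: int where t: "0 \<le> t" "t < 2 * pi"
    and k: "(if \<omega> > 0 then \<alpha> - \<theta> else \<theta> - \<alpha>) = t + 2 * pi * of_int k"
    using representative_mod_2pi by blast
  show ?thesis
  proof
    show "t / \<bar>\<omega>\<bar> \<ge> 0" "\<bar>\<omega> * (t / \<bar>\<omega>\<bar>)\<bar> < 2 * pi"
      using t assms by (simp_all add: abs_mult)
    have "\<theta> + \<omega> * (t / \<bar>\<omega>\<bar>) = \<alpha> + 2 * pi * of_int (if \<omega> > 0 then - k else k)"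
      using k assms by (auto split: if_splits)
    then show "heading_cong (\<theta> + \<omega> * (t / \<bar>\<omega>\<bar>)) \<alpha>"
      unfolding heading_cong_def by blast
  qed
qed

lemma exists_tangent_decomposition:
  fixes X Y r :: real
  assumes "r\<^sup>2 \<le> X\<^sup>2 + Y\<^sup>2"
  obtains L \<phi> where "L \<ge> 0" "X = L * cos \<phi> - r * sin \<phi>" "Y = L * sin \<phi> + r * cos \<phi>"
proof -
  define N where "N = X\<^sup>2 + Y\<^sup>2"
  define L where "L = sqrt (N - r\<^sup>2)"
  have L: "L \<ge> 0" "L\<^sup>2 = N - r\<^sup>2"
    using assms by (simp_all add: L_def N_def)
  show ?thesis
  proof (cases "N = 0")
    case True
    then have "X = 0" "Y = 0" "r = 0"
      using assms by (simp_all add: N_def sum_power2_eq_zero_iff)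
    with L show ?thesis
      using that by auto
  next
    case False
    then have N: "N > 0"
      by (simp add: N_def sum_power2_gt_zero_iff sum_power2_eq_zero_iff)
    \<comment> \<open>\<open>(cos \<phi>, sin \<phi>)\<close> is \<open>(X, Y)\<close> rotated back by the angle of \<open>(L, r)\<close>, which has the same length.\<close>
    define c where "c = (X * L + Y * r) / N"
    define s where "s = (Y * L - X * r) / N"
    have "(X * L + Y * r)\<^sup>2 + (Y * L - X * r)\<^sup>2 = N * (L\<^sup>2 + r\<^sup>2)"
      by (simp add: N_def power2_eq_square algebra_simps)
    also have "\<dots> = N\<^sup>2"
      using L(2) by (simp add: power2_eq_square)
    finally have "c\<^sup>2 + s\<^sup>2 = 1"
      using N by (simp add: c_def s_def power_divide add_divide_distrib[symmetric])
    then obtain \<phi> where \<phi>: "c = cos \<phi>" "s = sin \<phi>"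
      by (rule sincos_total_2pi)
    have "L * c - r * s = X * (L\<^sup>2 + r\<^sup>2) / N" "L * s + r * c = Y * (L\<^sup>2 + r\<^sup>2) / N"
      using N by (simp_all add: c_def s_def field_simps power2_eq_square)
    then have "X = L * c - r * s" "Y = L * s + r * c"
      using L(2) N by simp_all
    with L \<phi> show ?thesis
      using that by blast
  qed
qed

lemma csc_reachable_outside_disc:
  fixes v1 v2 v3 \<omega>1 \<omega>3 x0 y0 \<theta>0 xf yf \<theta>f :: real
  defines "r1 \<equiv> v1 / \<omega>1" and "r3 \<equiv> v3 / \<omega>3"
  assumes "\<omega>1 \<noteq> 0" "\<omega>3 \<noteq> 0" "v2 > 0"
    and "(r3 - r1)\<^sup>2 \<le> (xf - x0 - (r3 * sin \<theta>f - r1 * sin \<theta>0))\<^sup>2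
                        + (yf - y0 - (r1 * cos \<theta>0 - r3 * cos \<theta>f))\<^sup>2"
  shows "reachable (v1, \<omega>1) (v2, 0) (v3, \<omega>3) (x0, y0, \<theta>0) (xf, yf, \<theta>f)"
proof -
  obtain L \<phi> where L: "L \<ge> 0"
    and X: "xf - x0 - (r3 * sin \<theta>f - r1 * sin \<theta>0) = L * cos \<phi> - (r3 - r1) * sin \<phi>"
    and Y: "yf - y0 - (r1 * cos \<theta>0 - r3 * cos \<theta>f) = L * sin \<phi> + (r3 - r1) * cos \<phi>"
    using exists_tangent_decomposition assms(6) by blast
  obtain \<tau>1 where \<tau>1: "\<tau>1 \<ge> 0" "\<bar>\<omega>1 * \<tau>1\<bar> < 2 * pi" "heading_cong (\<theta>0 + \<omega>1 * \<tau>1) \<phi>"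
    using turning_reaches_heading assms(3) by blast
  obtain \<tau>3 where \<tau>3: "\<tau>3 \<ge> 0" "\<bar>\<omega>3 * \<tau>3\<bar> < 2 * pi"
    "heading_cong (\<theta>0 + \<omega>1 * \<tau>1 + \<omega>3 * \<tau>3) \<theta>f"
    using turning_reaches_heading assms(4) by blast
  have sincos1: "sin (\<theta>0 + \<omega>1 * \<tau>1) = sin \<phi>" "cos (\<theta>0 + \<omega>1 * \<tau>1) = cos \<phi>"
    using \<tau>1(3) sin_cos_eq_iff unfolding heading_cong_def by blast+
  have sincos3: "sin (\<theta>0 + \<omega>1 * \<tau>1 + \<omega>3 * \<tau>3) = sin \<theta>f"
    "cos (\<theta>0 + \<omega>1 * \<tau>1 + \<omega>3 * \<tau>3) = cos \<theta>f"
    using \<tau>3(3) sin_cos_eq_iff unfolding heading_cong_def by blast+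
  define \<tau>2 where "\<tau>2 = L / v2"
  have \<tau>2: "\<tau>2 \<ge> 0" "v2 * \<tau>2 = L"
    using L assms(5) by (simp_all add: \<tau>2_def)
  have "motion (v3, \<omega>3) \<tau>3 (motion (v2, 0) \<tau>2 (motion (v1, \<omega>1) \<tau>1 (x0, y0, \<theta>0))) =
      (x0 - r1 * (sin \<theta>0 - sin \<phi>) + L * cos \<phi> - r3 * (sin \<phi> - sin \<theta>f),
       y0 + r1 * (cos \<theta>0 - cos \<phi>) + L * sin \<phi> + r3 * (cos \<phi> - cos \<theta>f),
       \<theta>0 + \<omega>1 * \<tau>1 + \<omega>3 * \<tau>3)"
    using assms(3,4) sincos1 sincos3 \<tau>2 by (simp add: motion_def r1_def r3_def)
  also have "\<dots> = (xf, yf, \<theta>0 + \<omega>1 * \<tau>1 + \<omega>3 * \<tau>3)"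
    using X Y by (simp add: algebra_simps)
  finally show ?thesis
    unfolding reachable_def admissible_def using \<tau>1 \<tau>2 \<tau>3
    by (intro exI[of _ \<tau>1] exI[of _ \<tau>2] exI[of _ \<tau>3]) simp
qed

lemma circle_points_dist_sq_ge:
  fixes r1 r3 \<alpha> \<beta> :: real
  assumes "0 \<le> r1 * r3"
  shows "(r3 - r1)\<^sup>2 \<le> (r3 * sin \<beta> - r1 * sin \<alpha>)\<^sup>2 + (r1 * cos \<alpha> - r3 * cos \<beta>)\<^sup>2"
proof -
  have "(r3 * sin \<beta> - r1 * sin \<alpha>)\<^sup>2 + (r1 * cos \<alpha> - r3 * cos \<beta>)\<^sup>2
      = r1\<^sup>2 + r3\<^sup>2 - 2 * (r1 * r3) * cos (\<alpha> - \<beta>)"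
    by (simp add: cos_diff power2_eq_square algebra_simps flip: distrib_left)
  moreover have "(r1 * r3) * cos (\<alpha> - \<beta>) \<le> r1 * r3"
    using mult_left_mono[OF cos_le_one assms] by simp
  ultimately show ?thesis
    by (simp add: power2_diff algebra_simps)
qed

lemma outside_one_of_opposite_discs:
  fixes a b p q \<rho> :: real
  assumes "\<rho> \<le> p\<^sup>2 + q\<^sup>2"
  shows "\<rho> \<le> (a - p)\<^sup>2 + (b - q)\<^sup>2 \<or> \<rho> \<le> (a + p)\<^sup>2 + (b + q)\<^sup>2"
proof -
  have "(a - p)\<^sup>2 + (b - q)\<^sup>2 + ((a + p)\<^sup>2 + (b + q)\<^sup>2) = 2 * (a\<^sup>2 + b\<^sup>2) + 2 * (p\<^sup>2 + q\<^sup>2)"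
    by (simp add: power2_eq_square algebra_simps)
  with assms show ?thesis
    by (smt (verit) zero_le_power2)
qed

theorem theorem3:
  fixes v1 v2 v3 w1 w3 :: real and p0 pf :: pose
  assumes "v1 > 0" "v2 > 0" "v3 > 0" "w1 > 0" "w3 > 0"
  shows "reachable (v1, w1) (v2, 0) (v3, w3) p0 pf \<or>
         reachable (v1, - w1) (v2, 0) (v3, - w3) p0 pf"
proof -
  obtain x0 y0 \<theta>0 xf yf \<theta>f where poses: "p0 = (x0, y0, \<theta>0)" "pf = (xf, yf, \<theta>f)"
    by (metis prod.exhaust)
  define r1 where "r1 = v1 / w1"
  define r3 where "r3 = v3 / w3"
  have "0 \<le> r1 * r3"
    using assms by (simp add: r1_def r3_def)
  from outside_one_of_opposite_discs[OF circle_points_dist_sq_ge[OF this, of \<theta>f \<theta>0],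
      of "xf - x0" "yf - y0"]
  show ?thesis
  proof
    assume "(r3 - r1)\<^sup>2 \<le> (xf - x0 - (r3 * sin \<theta>f - r1 * sin \<theta>0))\<^sup>2
                          + (yf - y0 - (r1 * cos \<theta>0 - r3 * cos \<theta>f))\<^sup>2"
    then show ?thesis
      unfolding poses r1_def r3_def
      by (intro disjI1 csc_reachable_outside_disc) (use assms in simp_all)
  next
    assume "(r3 - r1)\<^sup>2 \<le> (xf - x0 + (r3 * sin \<theta>f - r1 * sin \<theta>0))\<^sup>2
                          + (yf - y0 + (r1 * cos \<theta>0 - r3 * cos \<theta>f))\<^sup>2"
    then show ?thesis
      unfolding poses r1_def r3_def
      by (intro disjI2 csc_reachable_outside_disc)
        (use assms in \<open>simp_all add: power2_commute algebra_simps\<close>)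
  qed
qed

end
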